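(* Let $d\ge2$ and $\overrightarrow{w}\in(0,\infty)^d$. For every random vector $\overrightarrow{U}=(U_1,\dots,U_d)$ with uniform$[0,1]$ marginals, $$l(\overrightarrow{w})\le\mathrm{Var}\left(\sum_{i=1}^dw_iU_i\right)\le\frac1{12}\left(\sum_{i=1}^dw_i\right)^2.$$ The lower bound is attained if and only if $\overrightarrow{U}$ is $\overrightarrow{w^*}$-CM, and the upper bound is attained if and only if $\overrightarrow{U}$ is comonotonic. In particular $\inf\{\mathrm{Var}(\sum_i w_iU_i)\}=l(\overrightarrow{w})$ over all such $\overrightarrow{U}$, and the infimum is attained.
   Context: A random vector $\overrightarrow{U}=(U_1,\dots,U_d)$ with each $U_i$ uniform on $[0,1]$ is $\overrightarrow{v}$-CM (for $\overrightarrow{v}\in(0,\infty)^d$) if $P\left(\sum_{i=1}^d v_iU_i=\frac12\sum_{i=1}^d v_i\right)=1$; it is comonotonic if $U_1=\cdots=U_d$ almost surely. For $\overrightarrow{w}\in(0,\infty)^d$, define $\overrightarrow{w^*}=(w_1^*,\dots,w_d^* )$ by $w_i^*=w_i$ if $2w_i\le\sum_{j=1}^dw_j$ and $w_i^*=\sum_{j=1}^dw_j-w_i$ if $2w_i>\sum_{j=1}^dw_j$; and define $l(\overrightarrow{w})=\frac1{12}\left[\left(2\max\{w_1,\dots,w_d\}-\sum_{i=1}^dw_i\right)_+\right]^2$, where $x_+=\max\{x,0\}$. *)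

theory Defs
  imports "HOL-Probability.Probability"
begin

text \<open>Vectors in (0,inf)^d are represented as functions nat => real, indices 0..d-1.
  A random vector is U :: nat => 'a => real on a probability space M.\<close>

definition wsum :: "nat \<Rightarrow> (nat \<Rightarrow> real) \<Rightarrow> real" where
  "wsum d w = (\<Sum>i<d. w i)"

definition wstar :: "nat \<Rightarrow> (nat \<Rightarrow> real) \<Rightarrow> nat \<Rightarrow> real" where
  "wstar d w i = (if 2 * w i \<le> wsum d w then w i else wsum d w - w i)"

definition lfun :: "nat \<Rightarrow> (nat \<Rightarrow> real) \<Rightarrow> real" where
  "lfun d w = (1/12) * (max (2 * Max (w ` {..<d}) - wsum d w) 0)^2"

definition unif_marginals :: "'a measure \<Rightarrow> nat \<Rightarrow> (nat \<Rightarrow> 'a \<Rightarrow> real) \<Rightarrow> bool" where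
  "unif_marginals M d U \<longleftrightarrow>
     (\<forall>i<d. U i \<in> borel_measurable M \<and>
            distr M lborel (U i) = uniform_measure lborel {0..1})"

definition is_CM :: "'a measure \<Rightarrow> nat \<Rightarrow> (nat \<Rightarrow> real) \<Rightarrow> (nat \<Rightarrow> 'a \<Rightarrow> real) \<Rightarrow> bool" where
  "is_CM M d v U \<longleftrightarrow>
     measure M {x \<in> space M. (\<Sum>i<d. v i * U i x) = (1/2) * (\<Sum>i<d. v i)} = 1"

definition comonotonic :: "'a measure \<Rightarrow> nat \<Rightarrow> (nat \<Rightarrow> 'a \<Rightarrow> real) \<Rightarrow> bool" where
  "comonotonic M d U \<longleftrightarrow> (AE x in M. \<forall>i<d. \<forall>j<d. U i x = U j x)"

definition var_sum :: "'a measure \<Rightarrow> nat \<Rightarrow> (nat \<Rightarrow> real) \<Rightarrow> (nat \<Rightarrow> 'a \<Rightarrow> real) \<Rightarrow> real" where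
  "var_sum M d w U = prob_space.variance M (\<lambda>x. \<Sum>i<d. w i * U i x)"

end

theory Submission
  imports Defs
begin

(*
  With V_i = U_i - 1/2 one has Var(\<Sum> w_i U_i) = \<Sum>_{i,j} w_i w_j Cov(U_i, U_j), where
  Cov(U_i, U_i) = 1/12 and |Cov(U_i, U_j)| \<le> 1/12 because E[(V_i \<plusminus> V_j)^2] \<ge> 0.  The upper
  bound follows termwise, and equality forces E[(U_i - U_j)^2] = 0 for all i, j.

  For the lower bound let w_m be a largest weight and D = (2 w_m - \<Sum> w)_+, so that w = w* + D e_m
  and Var(\<Sum> w_i U_i) = D^2/12 + 2 D Cov(U_m, \<Sum> w*_i U_i) + Var(\<Sum> w*_i U_i).  If D > 0 then
  w*_m is the sum of the other entries of w*, and Cov(U_m, U_j) \<ge> -1/12 makes the middle term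
  nonnegative.  So the bound holds, with equality iff \<Sum> w*_i U_i is a.s. constant.

  Such a vector exists on [0,1] with Lebesgue measure.  If one weight dominates, take U_m(t) = t
  and U_i(t) = 1 - t otherwise.  If not, the prefix sums of the weights cross half the total
  inside some block j; the three groups before, at and after j satisfy the triangle inequality,
  and each group gets one of three piecewise linear measure-preserving maps whose weighted sum
  is constant.
*)

lemma (in prob_space) uniform01_rv_moments:
  fixes X :: "'a \<Rightarrow> real"
  assumes X: "X \<in> borel_measurable M" and distr_X: "distr M lborel X = uniform_measure lborel {0..1}"
  shows "AE x in M. 0 \<le> X x \<and> X x \<le> 1"
    and "expectation X = 1/2"
    and "variance X = 1/12"
proof -
  have "distributed M lborel X (\<lambda>x. indicator {0..1::real} x / measure lborel {0..1::real})"
    unfolding distributed_def distr_X uniform_measure_def using X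
    by (auto intro!: arg_cong2[where f=density] ext split: split_indicator)
  from uniform_distributed_expectation[OF this] uniform_distributed_variance[OF this]
  show "expectation X = 1/2" "variance X = 1/12" by simp_all
  have "AE x in uniform_measure lborel {0..1::real}. 0 \<le> x \<and> x \<le> 1"
    by (rule AE_uniform_measureI) auto
  then show "AE x in M. 0 \<le> X x \<and> X x \<le> 1"
    unfolding distr_X[symmetric] by (subst (asm) AE_distr_iff) (auto simp: X)
qed

lemma lfun_eq_excess:
  assumes "m < d" "\<forall>i<d. w i \<le> w m"
  shows "lfun d w = (max (2 * w m - wsum d w) 0)^2 / 12"
proof -
  have "Max (w ` {..<d}) = w m"
    using assms by (intro Max_eqI) auto
  then show ?thesis
    unfolding lfun_def by simp
qed

lemma add_le_wsum:
  fixes w :: "nat \<Rightarrow> real"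
  assumes "\<forall>k<d. 0 \<le> w k" "i < d" "j < d" "i \<noteq> j"
  shows "w i + w j \<le> wsum d w"
proof -
  have "w i + w j = (\<Sum>k\<in>{i, j}. w k)"
    using assms(4) by simp
  also have "\<dots> \<le> wsum d w"
    unfolding wsum_def using assms by (intro sum_mono2) auto
  finally show ?thesis .
qed

lemma wstar_excess:
  fixes w :: "nat \<Rightarrow> real"
  assumes nonneg: "\<forall>i<d. 0 \<le> w i" and m: "m < d" and max: "\<forall>i<d. w i \<le> w m" and i: "i < d"
  shows "wstar d w i = w i - (if i = m then max (2 * w m - wsum d w) 0 else 0)"
proof (cases "i = m")
  case True
  then show ?thesis
    unfolding wstar_def by auto
next
  case False
  have "2 * w i \<le> wsum d w"
    using add_le_wsum[OF nonneg i m False] max[rule_format, OF i] by linarith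
  then show ?thesis
    using False unfolding wstar_def by simp
qed

lemma wstar_max_balanced:
  fixes w :: "nat \<Rightarrow> real"
  assumes nonneg: "\<forall>i<d. 0 \<le> w i" and m: "m < d" and max: "\<forall>i<d. w i \<le> w m"
    and excess: "wsum d w < 2 * w m"
  shows "wstar d w m = (\<Sum>j\<in>{..<d} - {m}. wstar d w j)"
proof -
  have "(\<Sum>j\<in>{..<d} - {m}. wstar d w j) = (\<Sum>j\<in>{..<d} - {m}. w j)"
    using wstar_excess[OF nonneg m max] by (intro sum.cong) auto
  also have "\<dots> = wsum d w - w m"
    using m by (simp add: wsum_def sum_diff1)
  finally show ?thesis
    using excess by (simp add: wstar_def)
qed

lemma ex_max_index:
  fixes w :: "nat \<Rightarrow> 'b::linorder"
  assumes "0 < d"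
  obtains m where "m < d" "\<forall>i<d. w i \<le> w m"
proof -
  have "Max (w ` {..<d}) \<in> w ` {..<d}"
    using assms by (intro Max_in) auto
  then obtain m where "m < d" "w m = Max (w ` {..<d})"
    by auto
  then show ?thesis
    using that by auto
qed

locale unif_vector = prob_space M for M :: "'a measure" +
  fixes d :: nat and U :: "nat \<Rightarrow> 'a \<Rightarrow> real"
  assumes unif: "unif_marginals M d U"
begin

lemma measurable_U[measurable]: "i < d \<Longrightarrow> U i \<in> borel_measurable M"
  using unif unfolding unif_marginals_def by blast

lemma U_uniform:
  assumes "i < d"
  shows "AE x in M. 0 \<le> U i x \<and> U i x \<le> 1" "expectation (U i) = 1/2" "variance (U i) = 1/12"
  using uniform01_rv_moments[of "U i"] unif assms unfolding unif_marginals_def by auto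

lemma AE_U_bounds: "AE x in M. \<forall>i<d. 0 \<le> U i x \<and> U i x \<le> 1"
proof -
  have "AE x in M. \<forall>i\<in>{..<d}. 0 \<le> U i x \<and> U i x \<le> 1"
    by (intro AE_finite_allI U_uniform(1)) auto
  then show ?thesis by auto
qed

lemma integrable_U[intro]:
  assumes "i < d"
  shows "integrable M (U i)"
proof (rule integrable_const_bound[where B=1])
  show "AE x in M. norm (U i x) \<le> 1"
    using U_uniform(1)[OF assms] by (rule eventually_mono) auto
qed (use assms in simp)

lemma integrable_coord_prod[intro]:
  assumes "i < d" "j < d"
  shows "integrable M (\<lambda>x. (U i x - 1/2) * (U j x - 1/2))"
proof (rule integrable_const_bound[where B=1])
  show "AE x in M. norm ((U i x - 1/2) * (U j x - 1/2)) \<le> 1"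
    using AE_U_bounds
  proof (rule eventually_mono)
    fix x assume "\<forall>i<d. 0 \<le> U i x \<and> U i x \<le> 1"
    then have "\<bar>U i x - 1/2\<bar> \<le> 1" "\<bar>U j x - 1/2\<bar> \<le> 1" using assms by auto
    then show "norm ((U i x - 1/2) * (U j x - 1/2)) \<le> 1"
      by (simp add: abs_mult mult_le_one)
  qed
qed (use assms in simp)

definition centred :: "(nat \<Rightarrow> real) \<Rightarrow> 'a \<Rightarrow> real" where
  "centred a x = (\<Sum>i<d. a i * (U i x - 1/2))"

definition cov :: "nat \<Rightarrow> nat \<Rightarrow> real" where
  "cov i j = expectation (\<lambda>x. (U i x - 1/2) * (U j x - 1/2))"

lemma measurable_centred[measurable]: "centred a \<in> borel_measurable M"
  unfolding centred_def by measurable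

lemma centred_eq: "centred a x = (\<Sum>i<d. a i * U i x) - (1/2) * (\<Sum>i<d. a i)"
  by (simp add: centred_def right_diff_distrib sum_subtractf sum_distrib_left mult.commute)

lemma cov_diag:
  assumes "i < d"
  shows "cov i i = 1/12"
  using U_uniform(3)[OF assms] unfolding U_uniform(2)[OF assms] by (simp add: cov_def power2_eq_square)

lemma integrable_centred: "integrable M (centred a)"
  unfolding centred_def by (intro Bochner_Integration.integrable_sum integrable_mult_right) auto

lemma expectation_centred: "expectation (centred a) = 0"
proof -
  have "expectation (centred a) = (\<Sum>i<d. a i * expectation (\<lambda>x. U i x - 1/2))"
    unfolding centred_def by (subst Bochner_Integration.integral_sum) auto
  also have "\<dots> = 0"
  proof -
    have "expectation (\<lambda>x. U i x - 1/2) = 0" if "i < d" for i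
      using U_uniform(2)[OF that] integrable_U[OF that] by (simp add: prob_space)
    then show ?thesis by simp
  qed
  finally show ?thesis .
qed

lemma centred_mult_expand:
  "centred a x * centred b x = (\<Sum>i<d. \<Sum>j<d. a i * b j * ((U i x - 1/2) * (U j x - 1/2)))"
  by (simp add: centred_def sum_product algebra_simps)

lemma integrable_centred_mult: "integrable M (\<lambda>x. centred a x * centred b x)"
  unfolding centred_mult_expand
  by (intro Bochner_Integration.integrable_sum integrable_mult_right) auto

lemma expectation_centred_mult:
  "expectation (\<lambda>x. centred a x * centred b x) = (\<Sum>i<d. \<Sum>j<d. a i * b j * cov i j)"
proof -
  have int: "integrable M (\<lambda>x. a i * b j * ((U i x - 1/2) * (U j x - 1/2)))"
    if "i < d" "j < d" for i j
    using that by (intro integrable_mult_right integrable_coord_prod)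
  have "expectation (\<lambda>x. \<Sum>j<d. a i * b j * ((U i x - 1/2) * (U j x - 1/2)))
      = (\<Sum>j<d. a i * b j * cov i j)" if "i < d" for i
    using that by (subst Bochner_Integration.integral_sum) (auto simp: int cov_def)
  then show ?thesis
    unfolding centred_mult_expand
    by (subst Bochner_Integration.integral_sum)
       (auto intro!: Bochner_Integration.integrable_sum simp: int)
qed

lemma var_sum_eq: "var_sum M d a U = expectation (\<lambda>x. (centred a x)^2)"
proof -
  have sum_eq: "(\<Sum>i<d. a i * U i x) = centred a x + (\<Sum>i<d. a i) / 2" for x
    by (simp add: centred_eq)
  have mean: "expectation (\<lambda>x. centred a x + (\<Sum>i<d. a i) / 2) = (\<Sum>i<d. a i) / 2"
    using expectation_centred[of a]
    by (simp add: Bochner_Integration.integral_add integrable_centred prob_space)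
  show ?thesis
    unfolding var_sum_def sum_eq mean by simp
qed

lemma var_sum_quadratic_form: "var_sum M d a U = (\<Sum>i<d. \<Sum>j<d. a i * a j * cov i j)"
  unfolding var_sum_eq power2_eq_square by (rule expectation_centred_mult)

lemma is_CM_iff: "is_CM M d a U \<longleftrightarrow> (AE x in M. centred a x = 0)"
proof -
  have "{x \<in> space M. (\<Sum>i<d. a i * U i x) = (1/2) * (\<Sum>i<d. a i)} \<in> events"
    by measurable
  from prob_eq_1[OF this] show ?thesis
    unfolding is_CM_def centred_eq by (auto elim: eventually_mono)
qed

lemma var_sum_eq_0_iff: "var_sum M d a U = 0 \<longleftrightarrow> is_CM M d a U"
  unfolding var_sum_eq is_CM_iff
  using integrable_centred_mult[of a a]
  by (subst integral_nonneg_eq_0_iff_AE) (auto simp: power2_eq_square)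

lemma centred_pair_sq:
  fixes c :: real
  assumes "i < d" "j < d"
  defines "f \<equiv> \<lambda>x. ((U i x - 1/2) + c * (U j x - 1/2))^2"
  shows "integrable M f" and "expectation f = (1 + c^2) / 12 + 2 * c * cov i j"
proof -
  have f_eq: "f = (\<lambda>x. (U i x - 1/2) * (U i x - 1/2) + c^2 * ((U j x - 1/2) * (U j x - 1/2))
                     + 2 * c * ((U i x - 1/2) * (U j x - 1/2)))"
    unfolding f_def by (simp add: power2_eq_square algebra_simps)
  show "integrable M f"
    unfolding f_eq using assms by (simp add: integrable_coord_prod)
  have "expectation f = cov i i + c^2 * cov j j + 2 * c * cov i j"
    unfolding f_eq cov_def using assms
    by (simp add: Bochner_Integration.integral_add integrable_coord_prod)
  then show "expectation f = (1 + c^2) / 12 + 2 * c * cov i j"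
    using assms by (simp add: cov_diag add_divide_distrib)
qed

lemma abs_cov_le:
  assumes "i < d" "j < d"
  shows "\<bar>cov i j\<bar> \<le> 1/12"
proof -
  have "0 \<le> expectation (\<lambda>x. ((U i x - 1/2) + c * (U j x - 1/2))^2)" for c
    by simp
  from this[of 1] this[of "-1"] show ?thesis
    unfolding centred_pair_sq(2)[OF assms] by auto
qed

lemma cov_eq_iff:
  assumes "i < d" "j < d"
  shows "cov i j = 1/12 \<longleftrightarrow> (AE x in M. U i x = U j x)"
proof -
  have "cov i j = 1/12 \<longleftrightarrow> expectation (\<lambda>x. ((U i x - 1/2) + -1 * (U j x - 1/2))^2) = 0"
    unfolding centred_pair_sq(2)[OF assms] by auto
  also have "\<dots> \<longleftrightarrow> (AE x in M. ((U i x - 1/2) + -1 * (U j x - 1/2))^2 = 0)"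
    by (rule integral_nonneg_eq_0_iff_AE[OF centred_pair_sq(1)[OF assms]]) simp
  also have "\<dots> \<longleftrightarrow> (AE x in M. U i x = U j x)"
    by simp
  finally show ?thesis .
qed

lemma comonotone_bound_minus_var_sum:
  "(1/12) * (\<Sum>i<d. w i)^2 - var_sum M d w U = (\<Sum>i<d. \<Sum>j<d. w i * w j * (1/12 - cov i j))"
proof -
  have "(1/12) * (\<Sum>i<d. w i)^2 = (\<Sum>i<d. \<Sum>j<d. w i * w j * (1/12))"
    by (simp add: power2_eq_square sum_product sum_distrib_left sum_distrib_right algebra_simps)
  then show ?thesis
    by (simp add: var_sum_quadratic_form right_diff_distrib sum_subtractf)
qed

lemma comonotone_gap_term_nonneg:
  assumes "i < d" "j < d" "0 \<le> w i" "0 \<le> w j"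
  shows "0 \<le> w i * w j * (1/12 - cov i j)"
  using abs_cov_le[of i j] assms by (intro mult_nonneg_nonneg) (auto simp: abs_le_iff)

lemma var_sum_le_comonotone_bound:
  assumes "\<forall>i<d. 0 \<le> w i"
  shows "var_sum M d w U \<le> (1/12) * (\<Sum>i<d. w i)^2"
proof -
  have "0 \<le> (\<Sum>i<d. \<Sum>j<d. w i * w j * (1/12 - cov i j))"
    using assms by (intro sum_nonneg comonotone_gap_term_nonneg) auto
  then show ?thesis
    using comonotone_bound_minus_var_sum[of w] by simp
qed

lemma var_sum_eq_comonotone_bound_iff:
  assumes pos: "\<forall>i<d. 0 < w i"
  shows "var_sum M d w U = (1/12) * (\<Sum>i<d. w i)^2 \<longleftrightarrow> comonotonic M d U"
proof -
  have nonzero: "i < d \<Longrightarrow> w i \<noteq> 0" for i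
    using pos by force
  have "var_sum M d w U = (1/12) * (\<Sum>i<d. w i)^2
      \<longleftrightarrow> (\<Sum>(i, j)\<in>{..<d} \<times> {..<d}. w i * w j * (1/12 - cov i j)) = 0"
    using comonotone_bound_minus_var_sum[of w] by (auto simp: sum.cartesian_product)
  also have "\<dots> \<longleftrightarrow> (\<forall>i\<in>{..<d}. \<forall>j\<in>{..<d}. w i * w j * (1/12 - cov i j) = 0)"
    using pos by (subst sum_nonneg_eq_0_iff) (auto intro!: comonotone_gap_term_nonneg simp: less_imp_le)
  also have "\<dots> \<longleftrightarrow> (\<forall>i\<in>{..<d}. \<forall>j\<in>{..<d}. AE x in M. U i x = U j x)"
    by (auto simp: nonzero cov_eq_iff[symmetric])
  also have "\<dots> \<longleftrightarrow> (AE x in M. \<forall>i\<in>{..<d}. \<forall>j\<in>{..<d}. U i x = U j x)"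
    by (simp add: AE_finite_all)
  also have "\<dots> \<longleftrightarrow> comonotonic M d U"
    by (simp only: comonotonic_def Ball_def lessThan_iff)
  finally show ?thesis .
qed

lemma centred_add_unit:
  assumes b: "\<forall>i<d. b i = a i + (if i = m then D else 0)" and m: "m < d"
  shows "centred b x = centred a x + D * (U m x - 1/2)"
proof -
  have "centred b x = (\<Sum>i<d. a i * (U i x - 1/2) + (if i = m then D * (U i x - 1/2) else 0))"
    unfolding centred_def using b by (intro sum.cong) (auto simp: algebra_simps)
  then show ?thesis
    using m by (simp add: sum.distrib centred_def)
qed

lemma centred_unit: "m < d \<Longrightarrow> centred (\<lambda>i. of_bool (i = m)) x = U m x - 1/2"
  unfolding centred_def by (subst sum.cong[OF refl, where h="\<lambda>i. if i = m then U i x - 1/2 else 0"]) auto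

lemma expectation_cross:
  assumes "m < d"
  shows "expectation (\<lambda>x. (U m x - 1/2) * centred a x) = (\<Sum>j<d. a j * cov m j)"
  using expectation_centred_mult[of "\<lambda>i. of_bool (i = m)" a] assms
  by (simp add: centred_unit mult.assoc sum_distrib_left[symmetric])

lemma expectation_cross_ge:
  assumes m: "m < d" and nonneg: "\<forall>j<d. j \<noteq> m \<longrightarrow> 0 \<le> a j"
  shows "(a m - (\<Sum>j\<in>{..<d} - {m}. a j)) / 12 \<le> expectation (\<lambda>x. (U m x - 1/2) * centred a x)"
proof -
  have "(\<Sum>j\<in>{..<d} - {m}. - a j / 12) \<le> (\<Sum>j\<in>{..<d} - {m}. a j * cov m j)"
  proof (rule sum_mono)
    fix j assume "j \<in> {..<d} - {m}"
    then have "0 \<le> a j" "- (1/12) \<le> cov m j"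
      using nonneg abs_cov_le[OF m, of j] by (auto simp: abs_le_iff)
    then show "- a j / 12 \<le> a j * cov m j"
      using mult_left_mono by fastforce
  qed
  then show ?thesis
    using m unfolding expectation_cross[OF m]
    by (simp add: sum.remove[of "{..<d}" m] cov_diag sum_negf sum_divide_distrib diff_divide_distrib)
qed

lemma var_sum_add_unit:
  assumes b: "\<forall>i<d. b i = a i + (if i = m then D else 0)" and m: "m < d"
  shows "var_sum M d b U
           = D^2 / 12 + 2 * D * expectation (\<lambda>x. (U m x - 1/2) * centred a x) + var_sum M d a U"
proof -
  let ?e = "\<lambda>i. of_bool (i = m)"
  have "(centred b x)^2 = D^2 * (centred ?e x * centred ?e x) + 2 * D * (centred ?e x * centred a x)
                          + centred a x * centred a x" for x
    unfolding centred_add_unit[OF b m] centred_unit[OF m] by (simp add: power2_eq_square algebra_simps)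
  then have "var_sum M d b U = D^2 * expectation (\<lambda>x. centred ?e x * centred ?e x)
      + 2 * D * expectation (\<lambda>x. centred ?e x * centred a x) + expectation (\<lambda>x. centred a x * centred a x)"
    unfolding var_sum_eq by (simp add: integrable_centred_mult Bochner_Integration.integral_add)
  also have "expectation (\<lambda>x. centred ?e x * centred ?e x) = 1/12"
    unfolding expectation_centred_mult using m
    by (simp add: cov_diag mult.assoc sum_distrib_left[symmetric])
  finally show ?thesis
    unfolding var_sum_eq centred_unit[OF m] by (simp add: power2_eq_square)
qed

lemma var_sum_nonneg: "0 \<le> var_sum M d a U"
  unfolding var_sum_eq by simp

lemma excess_cross_term_nonneg:
  assumes nonneg: "\<forall>i<d. 0 \<le> w i" and m: "m < d" and max: "\<forall>i<d. w i \<le> w m"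
  shows "0 \<le> max (2 * w m - wsum d w) 0 * expectation (\<lambda>x. (U m x - 1/2) * centred (wstar d w) x)"
proof (cases "wsum d w < 2 * w m")
  case True
  have "0 \<le> wstar d w j" if "j < d" "j \<noteq> m" for j
    using wstar_excess[OF nonneg m max that(1)] nonneg that by simp
  then have "0 \<le> expectation (\<lambda>x. (U m x - 1/2) * centred (wstar d w) x)"
    using expectation_cross_ge[OF m, of "wstar d w"] wstar_max_balanced[OF nonneg m max True] by simp
  then show ?thesis
    by simp
qed simp

lemma lfun_le_var_sum:
  assumes d: "0 < d" and nonneg: "\<forall>i<d. 0 \<le> w i"
  shows "lfun d w \<le> var_sum M d w U"
    and "var_sum M d w U = lfun d w \<longleftrightarrow> is_CM M d (wstar d w) U"
proof -
  obtain m where m: "m < d" and max: "\<forall>i<d. w i \<le> w m"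
    using ex_max_index[OF d] .
  define D where "D = max (2 * w m - wsum d w) 0"
  define cross where "cross = expectation (\<lambda>x. (U m x - 1/2) * centred (wstar d w) x)"
  have w_eq: "\<forall>i<d. w i = wstar d w i + (if i = m then D else 0)"
    using wstar_excess[OF nonneg m max] unfolding D_def by simp
  have var: "var_sum M d w U = lfun d w + 2 * D * cross + var_sum M d (wstar d w) U"
    unfolding var_sum_add_unit[OF w_eq m] lfun_eq_excess[OF m max] cross_def D_def ..
  have cross_nonneg: "0 \<le> D * cross"
    unfolding D_def cross_def by (rule excess_cross_term_nonneg[OF nonneg m max])
  show "lfun d w \<le> var_sum M d w U"
    using var cross_nonneg var_sum_nonneg[of "wstar d w"] by simp
  show "var_sum M d w U = lfun d w \<longleftrightarrow> is_CM M d (wstar d w) U"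
  proof
    assume "var_sum M d w U = lfun d w"
    then have "var_sum M d (wstar d w) U = 0"
      using var cross_nonneg var_sum_nonneg[of "wstar d w"] by simp
    then show "is_CM M d (wstar d w) U"
      unfolding var_sum_eq_0_iff .
  next
    assume CM: "is_CM M d (wstar d w) U"
    then have "AE x in M. centred (wstar d w) x = 0"
      unfolding is_CM_iff .
    then have "cross = expectation (\<lambda>x. 0)"
      unfolding cross_def using m by (intro integral_cong_AE) (measurable, auto elim!: eventually_mono)
    with CM show "var_sum M d w U = lfun d w"
      using var by (simp add: var_sum_eq_0_iff[symmetric])
  qed
qed

end

abbreviation unif01 :: "real measure" where
  "unif01 \<equiv> uniform_measure lborel {0..1}"

lemma prob_space_unif01: "prob_space unif01"
  by (rule prob_space_uniform_measure) simp_all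

lemma distr_unif01_eqI:
  fixes G :: "real \<Rightarrow> real"
  assumes G[measurable]: "G \<in> borel_measurable borel"
    and preserving: "\<And>A. A \<in> sets borel \<Longrightarrow>
      (\<integral>\<^sup>+t. indicator {0..1} t * indicator A (G t) \<partial>lborel) = (\<integral>\<^sup>+x. indicator {0..1} x * indicator A x \<partial>lborel)"
  shows "distr unif01 lborel G = unif01"
proof (rule measure_eqI)
  fix A assume "A \<in> sets (distr unif01 lborel G)"
  then have A[measurable]: "A \<in> sets borel" by simp
  have "G \<in> measurable unif01 lborel"
    using G by (simp add: measurable_def)
  have "emeasure (distr unif01 lborel G) A = (\<integral>\<^sup>+x. indicator A x \<partial>distr unif01 lborel G)"
    by simp
  also have "\<dots> = (\<integral>\<^sup>+t. indicator A (G t) \<partial>unif01)"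
    using \<open>G \<in> measurable unif01 lborel\<close> by (intro nn_integral_distr) simp_all
  also have "\<dots> = (\<integral>\<^sup>+t. indicator {0..1} t * indicator A (G t) \<partial>lborel)"
    by (subst nn_integral_uniform_measure) (auto simp: mult.commute divide_ennreal_def)
  also have "\<dots> = (\<integral>\<^sup>+x. indicator A x \<partial>unif01)"
    unfolding preserving[OF A] by (subst nn_integral_uniform_measure) (auto simp: mult.commute divide_ennreal_def)
  finally show "emeasure (distr unif01 lborel G) A = emeasure unif01 A"
    by simp
qed simp

lemma distr_unif01_reflect: "distr unif01 lborel (\<lambda>t. 1 - t) = unif01"
proof (rule distr_unif01_eqI)
  fix A :: "real set" assume [measurable]: "A \<in> sets borel"
  have "(\<integral>\<^sup>+x. indicator {0..1} x * indicator A x \<partial>lborel)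
      = ennreal \<bar>-1\<bar> * (\<integral>\<^sup>+t. indicator {0..1} (1 + -1 * t) * indicator A (1 + -1 * t) \<partial>lborel)"
    by (rule nn_integral_real_affine) simp_all
  then show "(\<integral>\<^sup>+t. indicator {0..1} t * indicator A (1 - t) \<partial>lborel)
      = (\<integral>\<^sup>+x. indicator {0..1} x * indicator A x \<partial>lborel)"
    by (simp add: indicator_def conj_commute)
qed simp

definition affine_onto :: "real \<Rightarrow> real \<Rightarrow> real \<Rightarrow> real \<Rightarrow> real \<Rightarrow> real" where
  "affine_onto \<alpha> q u v t = u + (v - u) * (t - \<alpha>) / q"

lemma affine_onto_mem_iff:
  assumes "0 < q" "u \<noteq> v"
  shows "affine_onto \<alpha> q u v t \<in> {min u v..max u v} \<longleftrightarrow> t \<in> {\<alpha>..\<alpha> + q}"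
proof -
  have affine: "affine_onto \<alpha> q u v t = u + (v - u) * ((t - \<alpha>) / q)"
    by (simp add: affine_onto_def)
  have segment: "u + (v - u) * s \<in> {min u v..max u v} \<longleftrightarrow> 0 \<le> s \<and> s \<le> 1" for s
  proof (cases "u < v")
    case True
    have "u \<le> u + (v - u) * s \<longleftrightarrow> 0 \<le> s"
      using True by (simp add: zero_le_mult_iff)
    moreover have "u + (v - u) * s \<le> v \<longleftrightarrow> (v - u) * s \<le> (v - u) * 1"
      by (simp add: algebra_simps)
    ultimately show ?thesis
      using True by (simp add: mult_le_cancel_left_pos)
  next
    case False
    with assms(2) have vu: "v < u"
      by simp
    have "u + (v - u) * s \<le> u \<longleftrightarrow> 0 \<le> (u - v) * s"
      by (simp add: algebra_simps)
    also have "\<dots> \<longleftrightarrow> 0 \<le> s"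
      using vu by (simp add: zero_le_mult_iff)
    finally have "u + (v - u) * s \<le> u \<longleftrightarrow> 0 \<le> s" .
    moreover have "v \<le> u + (v - u) * s \<longleftrightarrow> (u - v) * s \<le> (u - v) * 1"
      by (simp add: algebra_simps)
    ultimately show ?thesis
      using vu by (auto simp: mult_le_cancel_left_pos)
  qed
  have "0 \<le> (t - \<alpha>) / q \<and> (t - \<alpha>) / q \<le> 1 \<longleftrightarrow> t \<in> {\<alpha>..\<alpha> + q}"
    using assms(1) by (auto simp: field_simps)
  then show ?thesis
    by (simp only: affine segment)
qed

lemma nn_integral_affine_onto:
  fixes h :: "real \<Rightarrow> ennreal"
  assumes h[measurable]: "h \<in> borel_measurable borel" and q: "0 \<le> q" and uv: "0 < q \<Longrightarrow> u \<noteq> v"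
    and f: "\<And>t. t \<in> {\<alpha>..<\<alpha> + q} \<Longrightarrow> f t = affine_onto \<alpha> q u v t"
  shows "(\<integral>\<^sup>+t. indicator {\<alpha>..<\<alpha> + q} t * h (f t) \<partial>lborel)
       = ennreal (q / \<bar>v - u\<bar>) * (\<integral>\<^sup>+x. indicator {min u v..max u v} x * h x \<partial>lborel)"
proof (cases "q = 0")
  case False
  with q uv have q: "0 < q" and uv: "u \<noteq> v"
    by auto
  define k where "k = (v - u) / q"
  have k: "k \<noteq> 0"
    using q uv by (simp add: k_def)
  have affine: "affine_onto \<alpha> q u v t = (u - k * \<alpha>) + k * t" for t
    using q by (simp add: affine_onto_def k_def field_simps)
  have "(\<integral>\<^sup>+x. indicator {min u v..max u v} x * h x \<partial>lborel)
      = ennreal \<bar>k\<bar> * (\<integral>\<^sup>+t. indicator {min u v..max u v} (affine_onto \<alpha> q u v t) * h (affine_onto \<alpha> q u v t) \<partial>lborel)"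
    unfolding affine by (rule nn_integral_real_affine[OF _ k]) simp
  also have "(\<integral>\<^sup>+t. indicator {min u v..max u v} (affine_onto \<alpha> q u v t) * h (affine_onto \<alpha> q u v t) \<partial>lborel)
      = (\<integral>\<^sup>+t. indicator {\<alpha>..<\<alpha> + q} t * h (f t) \<partial>lborel)"
  proof (intro nn_integral_cong_AE)
    have ind: "indicator {min u v..max u v} (affine_onto \<alpha> q u v t) = (indicator {\<alpha>..\<alpha> + q} t :: ennreal)" for t
      by (simp only: indicator_def affine_onto_mem_iff[OF q uv])
    show "AE t in lborel. indicator {min u v..max u v} (affine_onto \<alpha> q u v t) * h (affine_onto \<alpha> q u v t)
        = indicator {\<alpha>..<\<alpha> + q} t * h (f t)"
      using AE_lborel_singleton[of "\<alpha> + q"] by eventually_elim (simp add: ind, auto simp: indicator_def f)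
  qed
  finally show ?thesis
    using q uv by (simp add: k_def ennreal_mult'[symmetric] mult.assoc[symmetric] abs_divide)
qed simp

lemma nn_integral_indicator_mix3:
  fixes h :: "real \<Rightarrow> ennreal"
  assumes h[measurable]: "h \<in> borel_measurable borel" and c: "0 \<le> c1" "0 \<le> c2" "0 \<le> c3"
    and I[measurable]: "I1 \<in> sets borel" "I2 \<in> sets borel" "I3 \<in> sets borel"
    and mix: "AE x in lborel. c1 * indicator I1 x + c2 * indicator I2 x + c3 * indicator I3 x = (indicator J x :: real)"
  shows "ennreal c1 * (\<integral>\<^sup>+x. indicator I1 x * h x \<partial>lborel) + ennreal c2 * (\<integral>\<^sup>+x. indicator I2 x * h x \<partial>lborel)
          + ennreal c3 * (\<integral>\<^sup>+x. indicator I3 x * h x \<partial>lborel) = (\<integral>\<^sup>+x. indicator J x * h x \<partial>lborel)"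
proof -
  have "ennreal c1 * (\<integral>\<^sup>+x. indicator I1 x * h x \<partial>lborel) + ennreal c2 * (\<integral>\<^sup>+x. indicator I2 x * h x \<partial>lborel)
          + ennreal c3 * (\<integral>\<^sup>+x. indicator I3 x * h x \<partial>lborel)
      = (\<integral>\<^sup>+x. ennreal c1 * (indicator I1 x * h x) + ennreal c2 * (indicator I2 x * h x)
          + ennreal c3 * (indicator I3 x * h x) \<partial>lborel)"
    by (subst nn_integral_add, measurable, measurable, subst nn_integral_add, measurable, measurable)
       (simp add: nn_integral_cmult)
  also have "\<dots> = (\<integral>\<^sup>+x. ennreal (c1 * indicator I1 x + c2 * indicator I2 x + c3 * indicator I3 x) * h x \<partial>lborel)"
    using c by (intro nn_integral_cong) (simp add: ennreal_mult' ennreal_indicator distrib_right mult.assoc)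
  also have "\<dots> = (\<integral>\<^sup>+x. indicator J x * h x \<partial>lborel)"
    using mix by (intro nn_integral_cong_AE) (auto elim!: eventually_mono simp: ennreal_indicator)
  finally show ?thesis .
qed

definition piecewise_linear3 ::
    "real \<Rightarrow> real \<Rightarrow> real \<Rightarrow> real \<Rightarrow> real \<Rightarrow> real \<Rightarrow> real \<Rightarrow> real \<Rightarrow> real \<Rightarrow> real" where
  "piecewise_linear3 p1 p2 u1 v1 u2 v2 u3 v3 t =
     (if t < p1 then affine_onto 0 p1 u1 v1 t
      else if t < p1 + p2 then affine_onto p1 p2 u2 v2 t
      else affine_onto (p1 + p2) (1 - p1 - p2) u3 v3 t)"

lemma measurable_piecewise_linear3[measurable]:
  "piecewise_linear3 p1 p2 u1 v1 u2 v2 u3 v3 \<in> borel_measurable borel"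
  unfolding piecewise_linear3_def affine_onto_def by measurable

lemma distr_piecewise_linear3:
  fixes p1 p2 :: real
  defines "p3 \<equiv> 1 - p1 - p2"
  assumes p: "0 \<le> p1" "0 \<le> p2" "0 \<le> p3"
    and uv: "0 < p1 \<Longrightarrow> u1 \<noteq> v1" "0 < p2 \<Longrightarrow> u2 \<noteq> v2" "0 < p3 \<Longrightarrow> u3 \<noteq> v3"
    and density: "AE x in lborel.
        p1 / \<bar>v1 - u1\<bar> * indicator {min u1 v1..max u1 v1} x + p2 / \<bar>v2 - u2\<bar> * indicator {min u2 v2..max u2 v2} x
        + p3 / \<bar>v3 - u3\<bar> * indicator {min u3 v3..max u3 v3} x = (indicator {0..1} x :: real)"
  shows "distr unif01 lborel (piecewise_linear3 p1 p2 u1 v1 u2 v2 u3 v3) = unif01"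
proof (rule distr_unif01_eqI)
  let ?G = "piecewise_linear3 p1 p2 u1 v1 u2 v2 u3 v3"
  show "?G \<in> borel_measurable borel"
    by measurable
  fix A :: "real set" assume [measurable]: "A \<in> sets borel"
  have "(\<integral>\<^sup>+t. indicator {0..1} t * indicator A (?G t) \<partial>lborel)
      = (\<integral>\<^sup>+t. indicator {0..<p1} t * indicator A (?G t) + indicator {p1..<p1 + p2} t * indicator A (?G t)
          + indicator {p1 + p2..<p1 + p2 + p3} t * indicator A (?G t) \<partial>lborel)"
  proof (intro nn_integral_cong_AE)
    have "indicator {0..1} t
        = (indicator {0..<p1} t + indicator {p1..<p1 + p2} t + indicator {p1 + p2..<p1 + p2 + p3} t :: ennreal)"
      if "t \<noteq> 1" for t
      using that p unfolding p3_def by (simp add: indicator_def)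
    then show "AE t in lborel. indicator {0..1} t * indicator A (?G t)
        = indicator {0..<p1} t * indicator A (?G t) + indicator {p1..<p1 + p2} t * indicator A (?G t)
          + indicator {p1 + p2..<p1 + p2 + p3} t * (indicator A (?G t) :: ennreal)"
      using AE_lborel_singleton[of 1] by (auto elim!: eventually_mono simp: distrib_right)
  qed
  also have "\<dots> = ennreal (p1 / \<bar>v1 - u1\<bar>) * (\<integral>\<^sup>+x. indicator {min u1 v1..max u1 v1} x * indicator A x \<partial>lborel)
      + ennreal (p2 / \<bar>v2 - u2\<bar>) * (\<integral>\<^sup>+x. indicator {min u2 v2..max u2 v2} x * indicator A x \<partial>lborel)
      + ennreal (p3 / \<bar>v3 - u3\<bar>) * (\<integral>\<^sup>+x. indicator {min u3 v3..max u3 v3} x * indicator A x \<partial>lborel)"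
  proof -
    have "(\<integral>\<^sup>+t. indicator {0..<0 + p1} t * indicator A (?G t) \<partial>lborel)
        = ennreal (p1 / \<bar>v1 - u1\<bar>) * (\<integral>\<^sup>+x. indicator {min u1 v1..max u1 v1} x * indicator A x \<partial>lborel)"
      using p uv by (intro nn_integral_affine_onto) (simp_all add: piecewise_linear3_def)
    moreover have "(\<integral>\<^sup>+t. indicator {p1..<p1 + p2} t * indicator A (?G t) \<partial>lborel)
        = ennreal (p2 / \<bar>v2 - u2\<bar>) * (\<integral>\<^sup>+x. indicator {min u2 v2..max u2 v2} x * indicator A x \<partial>lborel)"
      using p uv by (intro nn_integral_affine_onto) (simp_all add: piecewise_linear3_def)
    moreover have "(\<integral>\<^sup>+t. indicator {p1 + p2..<p1 + p2 + p3} t * indicator A (?G t) \<partial>lborel)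
        = ennreal (p3 / \<bar>v3 - u3\<bar>) * (\<integral>\<^sup>+x. indicator {min u3 v3..max u3 v3} x * indicator A x \<partial>lborel)"
      using p uv by (intro nn_integral_affine_onto) (simp_all add: piecewise_linear3_def p3_def)
    moreover have "(\<lambda>t. indicator S t * indicator A (?G t) :: ennreal) \<in> borel_measurable lborel"
      if "S \<in> sets borel" for S
      using that by measurable
    ultimately show ?thesis
      by (simp add: nn_integral_add)
  qed
  also have "\<dots> = (\<integral>\<^sup>+x. indicator {0..1} x * indicator A x \<partial>lborel)"
    using p by (intro nn_integral_indicator_mix3[OF _ _ _ _ _ _ _ density]) simp_all
  finally show "(\<integral>\<^sup>+t. indicator {0..1} t * indicator A (?G t) \<partial>lborel)
      = (\<integral>\<^sup>+x. indicator {0..1} x * indicator A x \<partial>lborel)" .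
qed

lemma affine_onto_lincomb3:
  "a * affine_onto \<alpha> q u1 v1 t + b * affine_onto \<alpha> q u2 v2 t + c * affine_onto \<alpha> q u3 v3 t
     = affine_onto \<alpha> q (a * u1 + b * u2 + c * u3) (a * v1 + b * v2 + c * v3) t"
  by (simp add: affine_onto_def algebra_simps add_divide_distrib[symmetric])

lemma affine_onto_const: "affine_onto \<alpha> q k k t = k"
  by (simp add: affine_onto_def)

lemma AE_indicator_split:
  fixes \<tau> c\<^sub>l c\<^sub>h c :: real
  assumes "0 \<le> \<tau>" "\<tau> \<le> 1" "0 < \<tau> \<Longrightarrow> c\<^sub>l + c = 1" "\<tau> < 1 \<Longrightarrow> c\<^sub>h + c = 1"
  shows "AE x in lborel. c\<^sub>l * indicator {0..\<tau>} x + c\<^sub>h * indicator {\<tau>..1} x + c * indicator {0..1} x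
           = (indicator {0..1} x :: real)"
  using AE_lborel_singleton[of 0] AE_lborel_singleton[of 1] AE_lborel_singleton[of \<tau>]
proof eventually_elim
  case (elim x)
  then consider "x < 0 \<or> 1 < x" | "0 < x" "x < \<tau>" | "\<tau> < x" "x < 1"
    by linarith
  then show ?case
    by cases (use assms in \<open>auto simp: indicator_def\<close>)
qed

(*
  x, y, z are the slacks in the triangle inequalities for the weights a, b, c.  The maps are
  affine on [0, p1), [p1, p1 + p2), [p1 + p2, 1), whose lengths are proportional to xy, yz, zx;
  the endpoint values make a GX + b GY + c GZ = x + y + z at both ends of every piece, and the
  lengths make every map measure preserving.
*)
locale joint_mix3 =
  fixes x y z :: real
  assumes x: "0 \<le> x" and y: "0 < y" and z: "0 < z"
begin

definition "S = x * y + y * z + z * x"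
definition "p1 = x * y / S"
definition "p2 = y * z / S"
definition "a = y + z"
definition "b = x + z"
definition "c = x + y"

definition "GX = piecewise_linear3 p1 p2 1 (z / a) 0 1 (z / a) 0"
definition "GY = piecewise_linear3 p1 p2 (x / b) 0 1 (x / b) 0 1"
definition "GZ = piecewise_linear3 p1 p2 0 1 (y / c) 0 1 (y / c)"

lemma S_pos: "0 < S"
proof -
  have "0 \<le> x * y" "0 < y * z" "0 \<le> z * x"
    using x y z by simp_all
  then show ?thesis
    unfolding S_def by linarith
qed

lemma weights_pos: "0 < a" "0 < b" "0 < c"
  using x y z by (auto simp: a_def b_def c_def)

lemma p3_eq: "1 - p1 - p2 = z * x / S"
proof -
  have "1 - p1 - p2 = (S - x * y - y * z) / S"
    using S_pos by (simp add: p1_def p2_def diff_divide_distrib)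
  then show ?thesis
    by (simp add: S_def)
qed

lemma p_nonneg: "0 \<le> p1" "0 \<le> p2" "0 \<le> 1 - p1 - p2"
  unfolding p3_eq using x y z S_pos by (simp_all add: p1_def p2_def)

lemma x_pos_if_outer_piece: "0 < p1 \<or> 0 < 1 - p1 - p2 \<Longrightarrow> 0 < x"
  unfolding p3_eq unfolding p1_def using x S_pos by (cases "x = 0") auto

lemma weighted_sum_const: "a * GX t + b * GY t + c * GZ t = x + y + z"
  using weights_pos
  by (simp add: GX_def GY_def GZ_def piecewise_linear3_def affine_onto_lincomb3 affine_onto_const)
     (simp add: a_def b_def c_def algebra_simps affine_onto_const)

lemma distr_GX: "distr unif01 lborel GX = unif01"
proof -
  define \<tau> where "\<tau> = z / a"
  have \<tau>: "0 < \<tau>" "\<tau> < 1"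
    using y z by (simp_all add: \<tau>_def a_def)
  have "AE u in lborel. (1 - p1 - p2) / \<tau> * indicator {0..\<tau>} u + p1 / (1 - \<tau>) * indicator {\<tau>..1} u
      + p2 * indicator {0..1} u = (indicator {0..1} u :: real)"
  proof (rule AE_indicator_split)
    have "x * a / S + p2 = 1"
      using S_pos by (simp add: p2_def add_divide_distrib[symmetric]) (simp add: S_def a_def algebra_simps)
    moreover have "1 - \<tau> = y / a"
      using weights_pos by (simp add: \<tau>_def a_def field_simps)
    moreover have "(1 - p1 - p2) / \<tau> = x * a / S"
      unfolding p3_eq \<tau>_def using z weights_pos by simp
    moreover have "p1 / (y / a) = x * a / S"
      unfolding p1_def using y weights_pos by simp
    ultimately show "(1 - p1 - p2) / \<tau> + p2 = 1" "p1 / (1 - \<tau>) + p2 = 1"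
      by simp_all
  qed (use \<tau> in auto)
  then show ?thesis
    unfolding GX_def \<tau>_def[symmetric] using \<tau>
    by (intro distr_piecewise_linear3[OF p_nonneg]) (auto elim!: eventually_mono simp: min_def max_def)
qed

lemma distr_GY: "distr unif01 lborel GY = unif01"
proof -
  define \<tau> where "\<tau> = x / b"
  have \<tau>: "0 \<le> \<tau>" "\<tau> < 1" "0 < \<tau> \<longleftrightarrow> 0 < x"
    using x z weights_pos by (auto simp: \<tau>_def b_def zero_less_divide_iff)
  have "AE u in lborel. p1 / \<tau> * indicator {0..\<tau>} u + p2 / (1 - \<tau>) * indicator {\<tau>..1} u
      + (1 - p1 - p2) * indicator {0..1} u = (indicator {0..1} u :: real)"
  proof (rule AE_indicator_split)
    have "y * b / S + (1 - p1 - p2) = 1"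
      using S_pos by (simp add: p3_eq add_divide_distrib[symmetric]) (simp add: S_def b_def algebra_simps)
    moreover have "1 - \<tau> = z / b"
      using weights_pos by (simp add: \<tau>_def b_def field_simps)
    moreover have "p2 / (z / b) = y * b / S"
      unfolding p2_def using z weights_pos by simp
    moreover have "p1 / \<tau> = y * b / S" if "0 < \<tau>"
      unfolding p1_def \<tau>_def using that \<tau>(3) weights_pos by simp
    ultimately show "0 < \<tau> \<Longrightarrow> p1 / \<tau> + (1 - p1 - p2) = 1" "p2 / (1 - \<tau>) + (1 - p1 - p2) = 1"
      by simp_all
  qed (use \<tau> in auto)
  then show ?thesis
    unfolding GY_def \<tau>_def[symmetric] using \<tau> x_pos_if_outer_piece
    by (intro distr_piecewise_linear3[OF p_nonneg]) (auto elim!: eventually_mono simp: min_def max_def)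
qed

lemma distr_GZ: "distr unif01 lborel GZ = unif01"
proof -
  define \<tau> where "\<tau> = y / c"
  have \<tau>: "0 < \<tau>" "\<tau> \<le> 1" "\<tau> < 1 \<longleftrightarrow> 0 < x"
    using x y weights_pos by (auto simp: \<tau>_def c_def)
  have "AE u in lborel. p2 / \<tau> * indicator {0..\<tau>} u + (1 - p1 - p2) / (1 - \<tau>) * indicator {\<tau>..1} u
      + p1 * indicator {0..1} u = (indicator {0..1} u :: real)"
  proof (rule AE_indicator_split)
    have "z * c / S + p1 = 1"
      using S_pos by (simp add: p1_def add_divide_distrib[symmetric]) (simp add: S_def c_def algebra_simps)
    moreover have "p2 / \<tau> = z * c / S"
      unfolding p2_def \<tau>_def using y weights_pos by simp
    moreover have "(1 - p1 - p2) / (1 - \<tau>) = z * c / S" if "\<tau> < 1"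
    proof -
      have "1 - \<tau> = x / c" "x \<noteq> 0"
        using that \<tau>(3) weights_pos by (auto simp: \<tau>_def c_def field_simps)
      then show ?thesis
        unfolding p3_eq by simp
    qed
    ultimately show "p2 / \<tau> + p1 = 1" "\<tau> < 1 \<Longrightarrow> (1 - p1 - p2) / (1 - \<tau>) + p1 = 1"
      by simp_all
  qed (use \<tau> in auto)
  then show ?thesis
    unfolding GZ_def \<tau>_def[symmetric] using \<tau> x_pos_if_outer_piece
    by (intro distr_piecewise_linear3[OF p_nonneg]) (auto elim!: eventually_mono simp: min_def max_def)
qed

lemma unif_marginals_blocks: "unif_marginals unif01 d (\<lambda>i. if i < j then GX else if i = j then GY else GZ)"
proof -
  have unif01: "f \<in> borel_measurable unif01" if "f \<in> borel_measurable borel" for f :: "real \<Rightarrow> real"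
    using that measurable_cong_sets[of unif01 borel borel borel] by simp
  have "GX \<in> borel_measurable unif01" "GY \<in> borel_measurable unif01" "GZ \<in> borel_measurable unif01"
    unfolding GX_def GY_def GZ_def by (intro unif01 measurable_piecewise_linear3)+
  then show ?thesis
    unfolding unif_marginals_def by (simp add: distr_GX distr_GY distr_GZ)
qed

end

lemma is_CM_unif01I:
  assumes U: "unif_marginals unif01 d U"
    and balanced: "\<And>t. 0 \<le> t \<Longrightarrow> t < 1 \<Longrightarrow> (\<Sum>i<d. a i * U i t) = (1/2) * (\<Sum>i<d. a i)"
  shows "is_CM unif01 d a U"
proof -
  interpret unif_vector unif01 d U
    by (simp add: unif_vector_def unif_vector_axioms_def prob_space_unif01 U)
  have "AE t in unif01. t \<in> {0..<1}"
    using AE_lborel_singleton[of 1] by (intro AE_uniform_measureI) (auto elim!: eventually_mono)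
  then show ?thesis
    unfolding is_CM_iff centred_eq by (rule eventually_mono) (auto simp: balanced)
qed

lemma CM_witness_dominant:
  fixes w :: "nat \<Rightarrow> real"
  assumes nonneg: "\<forall>i<d. 0 \<le> w i" and m: "m < d" and dominant: "wsum d w \<le> 2 * w m"
  shows "\<exists>U. unif_marginals unif01 d U \<and> is_CM unif01 d (wstar d w) U"
proof -
  define U :: "nat \<Rightarrow> real \<Rightarrow> real" where "U i = (if i = m then (\<lambda>t. t) else (\<lambda>t. 1 - t))" for i
  have "unif_marginals unif01 d U"
    unfolding unif_marginals_def U_def by (simp add: distr_id2 distr_unif01_reflect)
  moreover have "is_CM unif01 d (wstar d w) U"
  proof (rule is_CM_unif01I)
    have max: "\<forall>i<d. w i \<le> w m"
      using add_le_wsum[OF nonneg _ m] dominant by fastforce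
    then have ws: "wstar d w i = (if i = m then wsum d w - w m else w i)" if "i < d" for i
      using wstar_excess[OF nonneg m max that] dominant by auto
    have rest: "(\<Sum>i\<in>{..<d} - {m}. w i) = wsum d w - w m"
      unfolding wsum_def using m by (simp add: sum_diff1)
    fix t :: real
    have "(\<Sum>i<d. wstar d w i * U i t) = (wsum d w - w m) * t + (\<Sum>i\<in>{..<d} - {m}. w i * (1 - t))"
      using m by (simp add: sum.remove[of "{..<d}" m] ws U_def)
    also have "\<dots> = wsum d w - w m"
      unfolding sum_distrib_right[symmetric] rest by (simp add: algebra_simps)
    also have "\<dots> = (1/2) * (\<Sum>i<d. wstar d w i)"
      using m by (simp add: sum.remove[of "{..<d}" m] ws rest)
    finally show "(\<Sum>i<d. wstar d w i * U i t) = (1/2) * (\<Sum>i<d. wstar d w i)" .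
  qed (fact calculation)
  ultimately show ?thesis
    by blast
qed

lemma prefix_sum_crossing:
  fixes w :: "nat \<Rightarrow> real"
  assumes d: "0 < d" and nonneg: "\<forall>i<d. 0 \<le> w i" and balanced: "\<forall>i<d. 2 * w i < wsum d w"
  obtains j where "Suc j < d" "(\<Sum>i<j. w i) \<le> wsum d w / 2" "wsum d w / 2 < (\<Sum>i<Suc j. w i)"
proof -
  define P where "P n = (\<Sum>i<n. w i)" for n
  have "0 \<le> w 0" "2 * w 0 < wsum d w"
    using d nonneg balanced by auto
  then have "0 < wsum d w"
    by linarith
  then have crossing_exists: "wsum d w / 2 < P d"
    by (simp add: P_def wsum_def)
  define k where "k = (LEAST n. wsum d w / 2 < P n)"
  have Pk: "wsum d w / 2 < P k" and kd: "k \<le> d"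
    unfolding k_def using crossing_exists by (auto intro: LeastI Least_le)
  have "k \<noteq> 0"
  proof
    assume "k = 0"
    with Pk \<open>0 < wsum d w\<close> show False
      by (simp add: P_def)
  qed
  then obtain j where kj: "k = Suc j"
    using not0_implies_Suc by blast
  have Pj: "P j \<le> wsum d w / 2"
    using not_less_Least[of j "\<lambda>n. wsum d w / 2 < P n"] kj unfolding k_def[symmetric] by simp
  have "Suc j \<noteq> d"
  proof
    assume "Suc j = d"
    then have "P j + w j = wsum d w" "2 * w j < wsum d w"
      using balanced by (auto simp: P_def wsum_def)
    with Pj show False
      by linarith
  qed
  with kd kj have "Suc j < d"
    by simp
  then show ?thesis
    using that Pj Pk kj unfolding P_def by blast
qed

lemma CM_witness_balanced:
  fixes w :: "nat \<Rightarrow> real"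
  assumes d: "0 < d" and nonneg: "\<forall>i<d. 0 \<le> w i" and balanced: "\<forall>i<d. 2 * w i < wsum d w"
  shows "\<exists>U. unif_marginals unif01 d U \<and> is_CM unif01 d (wstar d w) U"
proof -
  obtain j where jd: "Suc j < d" and below: "(\<Sum>i<j. w i) \<le> wsum d w / 2"
    and above: "wsum d w / 2 < (\<Sum>i<Suc j. w i)"
    using prefix_sum_crossing[OF d nonneg balanced] .
  define s where "s = wsum d w"
  define P where "P n = (\<Sum>i<n. w i)" for n
  have split: "(\<Sum>i<d. f i) = (\<Sum>i<j. f i) + f j + (\<Sum>i\<in>{Suc j..<d}. f i)" for f :: "nat \<Rightarrow> real"
    using sum.atLeastLessThan_concat[of 0 "Suc j" d f] jd by (simp add: atLeast0LessThan)
  define x where "x = s/2 - P j"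
  define y where "y = s/2 - w j"
  define z where "z = P (Suc j) - s/2"
  interpret joint_mix3 x y z
    using below balanced[rule_format, of j] above jd
    by unfold_locales (auto simp: x_def y_def z_def s_def P_def)
  have weights: "a = P j" "b = w j" "c = s - P (Suc j)"
    unfolding a_def b_def c_def by (simp_all add: x_def y_def z_def P_def)
  define U :: "nat \<Rightarrow> real \<Rightarrow> real" where "U = (\<lambda>i. if i < j then GX else if i = j then GY else GZ)"
  have "unif_marginals unif01 d U"
    unfolding U_def by (rule unif_marginals_blocks)
  moreover have "is_CM unif01 d (wstar d w) U"
  proof (rule is_CM_unif01I)
    have ws: "i < d \<Longrightarrow> wstar d w i = w i" for i
      using balanced by (simp add: wstar_def less_imp_le)
    fix t :: real
    have "(\<Sum>i<j. w i * U i t) = P j * GX t"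
      unfolding P_def sum_distrib_right by (rule sum.cong) (simp_all add: U_def)
    moreover have "(\<Sum>i\<in>{Suc j..<d}. w i * U i t) = (s - P (Suc j)) * GZ t"
    proof -
      have "(\<Sum>i\<in>{Suc j..<d}. w i) = s - P (Suc j)"
        using split[of w] by (simp add: s_def wsum_def P_def)
      moreover have "(\<Sum>i\<in>{Suc j..<d}. w i * U i t) = (\<Sum>i\<in>{Suc j..<d}. w i) * GZ t"
        unfolding sum_distrib_right by (intro sum.cong) (simp_all add: U_def)
      ultimately show ?thesis
        by simp
    qed
    ultimately have "(\<Sum>i<d. w i * U i t) = P j * GX t + w j * GY t + (s - P (Suc j)) * GZ t"
      unfolding split[of "\<lambda>i. w i * U i t"] by (simp add: U_def)
    also have "\<dots> = s / 2"
      using weighted_sum_const[of t] unfolding weights by (simp add: x_def y_def z_def P_def)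
    finally show "(\<Sum>i<d. wstar d w i * U i t) = (1/2) * (\<Sum>i<d. wstar d w i)"
      by (simp add: ws s_def wsum_def)
  qed (fact calculation)
  ultimately show ?thesis
    by blast
qed

lemma CM_witness:
  fixes w :: "nat \<Rightarrow> real"
  assumes d: "0 < d" and nonneg: "\<forall>i<d. 0 \<le> w i"
  shows "\<exists>U. unif_marginals unif01 d U \<and> is_CM unif01 d (wstar d w) U"
proof (cases "\<exists>m<d. wsum d w \<le> 2 * w m")
  case True
  then show ?thesis
    using CM_witness_dominant[OF nonneg] by blast
next
  case False
  then show ?thesis
    using CM_witness_balanced[OF d nonneg] by (auto simp: not_le)
qed

lemma var_sum_bounds:
  fixes w :: "nat \<Rightarrow> real"
  assumes d: "0 < d" and pos: "\<forall>i<d. 0 < w i" and M: "prob_space M" "unif_marginals M d U"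
  shows "lfun d w \<le> var_sum M d w U \<and>
         var_sum M d w U \<le> (1/12) * (\<Sum>i<d. w i)^2 \<and>
         (var_sum M d w U = lfun d w \<longleftrightarrow> is_CM M d (wstar d w) U) \<and>
         (var_sum M d w U = (1/12) * (\<Sum>i<d. w i)^2 \<longleftrightarrow> comonotonic M d U)"
proof -
  interpret unif_vector M d U
    using M by (simp add: unif_vector_def unif_vector_axioms_def)
  have nonneg: "\<forall>i<d. 0 \<le> w i"
    using pos by (simp add: less_imp_le)
  show ?thesis
    using lfun_le_var_sum[OF d nonneg] var_sum_le_comonotone_bound[OF nonneg]
      var_sum_eq_comonotone_bound_iff[OF pos] by blast
qed

theorem mainTheorem11:
  fixes d :: nat and w :: "nat \<Rightarrow> real"
  assumes "d \<ge> 2" and "\<forall>i<d. w i > 0"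
  shows "(\<forall>(M :: 'a measure) U. prob_space M \<and> unif_marginals M d U \<longrightarrow>
            lfun d w \<le> var_sum M d w U \<and>
            var_sum M d w U \<le> (1/12) * (\<Sum>i<d. w i)^2 \<and>
            (var_sum M d w U = lfun d w \<longleftrightarrow> is_CM M d (wstar d w) U) \<and>
            (var_sum M d w U = (1/12) * (\<Sum>i<d. w i)^2 \<longleftrightarrow> comonotonic M d U))
       \<and> (INF p \<in> {(M :: real measure, U). prob_space M \<and> unif_marginals M d U}.
             var_sum (fst p) d w (snd p)) = lfun d w
       \<and> (\<exists>(M :: real measure) U. prob_space M \<and> unif_marginals M d U \<and>
             var_sum M d w U = lfun d w)"
proof -
  have d: "0 < d" and nonneg: "\<forall>i<d. 0 \<le> w i"
    using assms by (auto simp: less_imp_le)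
  note bounds = var_sum_bounds[OF d assms(2)]
  obtain U where U: "unif_marginals unif01 d U" "is_CM unif01 d (wstar d w) U"
    using CM_witness[OF d nonneg] by blast
  then have attained: "var_sum unif01 d w U = lfun d w"
    using bounds[OF prob_space_unif01] by blast
  have "(INF p \<in> {(M :: real measure, U). prob_space M \<and> unif_marginals M d U}.
          var_sum (fst p) d w (snd p)) = lfun d w"
  proof (rule cInf_eq_minimum)
    show "lfun d w \<in> (\<lambda>p. var_sum (fst p) d w (snd p)) ` {(M :: real measure, V). prob_space M \<and> unif_marginals M d V}"
      using U attained prob_space_unif01 by (intro image_eqI[where x="(unif01, U)"]) auto
  qed (auto dest: bounds)
  then show ?thesis
    using bounds U attained prob_space_unif01 by blast
qed

end
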